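(* Every digraph $F$ is $\vec{\chi}$-maderian. More precisely, $\mathrm{mad}_{\vec{\chi}}(F)\leq 4^m(n-1)+1$, where $m=|A(F)|$ and $n=|V(F)|$.
   Context: $\vec{\chi}(D)$, the dichromatic number, is the least $k$ such that $V(D)$ can be partitioned into $k$ sets each inducing an acyclic subdigraph. A subdivision of $F$ is obtained by replacing each arc $(x,y)$ by a directed $(x,y)$-path, internally disjoint with new internal vertices. $F$ is $\vec{\chi}$-maderian if there is an integer $c$ such that every digraph $D$ with $\vec{\chi}(D)\ge c$ contains a subdivision of $F$ as a subdigraph; $\mathrm{mad}_{\vec{\chi}}(F)$ is the least such $c$. *)

theory Defs
  imports Main
begin

text \<open>A (finite) digraph is given by a finite vertex set V and an arc set A \<subseteq> V \<times> V
  with no loops; digons (opposite arcs) are allowed, parallel arcs are not.\<close>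
definition digraph :: "'a set \<Rightarrow> ('a \<times> 'a) set \<Rightarrow> bool" where
  "digraph V A \<longleftrightarrow> finite V \<and> A \<subseteq> V \<times> V \<and> (\<forall>x. (x, x) \<notin> A)"

definition acyclic_set :: "('a \<times> 'a) set \<Rightarrow> 'a set \<Rightarrow> bool" where
  "acyclic_set A S \<longleftrightarrow> acyclic (A \<inter> (S \<times> S))"

text \<open>V can be partitioned into k sets, each inducing an acyclic subdigraph
  (colour classes c^{-1}(i), i < k; empty classes allowed).\<close>
definition dicolourable :: "'a set \<Rightarrow> ('a \<times> 'a) set \<Rightarrow> nat \<Rightarrow> bool" where
  "dicolourable V A k \<longleftrightarrow>
     (\<exists>c :: 'a \<Rightarrow> nat. (\<forall>v\<in>V. c v < k) \<and>
        (\<forall>i<k. acyclic_set A {v\<in>V. c v = i}))"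

definition dichromatic_number :: "'a set \<Rightarrow> ('a \<times> 'a) set \<Rightarrow> nat" where
  "dichromatic_number V A = (LEAST k. dicolourable V A k)"

definition dipath :: "'a set \<Rightarrow> ('a \<times> 'a) set \<Rightarrow> 'a list \<Rightarrow> bool" where
  "dipath V A p \<longleftrightarrow> p \<noteq> [] \<and> distinct p \<and> set p \<subseteq> V \<and>
     (\<forall>i. Suc i < length p \<longrightarrow> (p ! i, p ! Suc i) \<in> A)"

definition interior :: "'a list \<Rightarrow> 'a set" where
  "interior p = set (butlast (tl p))"

definition contains_subdivision ::
  "'a set \<Rightarrow> ('a \<times> 'a) set \<Rightarrow> 'b set \<Rightarrow> ('b \<times> 'b) set \<Rightarrow> bool" where
  "contains_subdivision V A VF AF \<longleftrightarrow>
     (\<exists>(phi :: 'b \<Rightarrow> 'a) (P :: 'b \<times> 'b \<Rightarrow> 'a list).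
        inj_on phi VF \<and> phi ` VF \<subseteq> V \<and>
        (\<forall>e\<in>AF. dipath V A (P e) \<and> hd (P e) = phi (fst e) \<and> last (P e) = phi (snd e)
                 \<and> interior (P e) \<inter> phi ` VF = {}) \<and>
        (\<forall>e\<in>AF. \<forall>e'\<in>AF. e \<noteq> e' \<longrightarrow> interior (P e) \<inter> set (P e') = {}))"

end

theory Submission
  imports Defs "HOL-Library.Transitive_Closure_Table"
begin

text \<open>Induction on the number of arcs of F. Call S \<subseteq> V linked if any two vertices of S are
  joined by a path of D whose interior avoids S. If every linked set were k-dicolourable, D
  would be 4k-dicolourable: fix a root in every strong component and group the vertices by
  their distances from and to the root; every group is linked, and colouring each group with k
  colours refined by the parities of the two distances leaves no monochromatic cycle. Hence
  if D is not 4^m(n-1)-dicolourable, some linked S is not 4^(m-1)(n-1)-dicolourable, D[S]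
  contains a subdivision of F minus an arc (x,y) by induction, and the missing arc is routed
  along a path between the images of x and y whose interior avoids S.\<close>

lemma acyclic_by_potential:
  fixes \<phi> :: "'a \<Rightarrow> 'b::linorder"
  assumes mono: "\<And>u w. (u, w) \<in> R \<Longrightarrow> \<phi> u \<le> \<phi> w"
    and level: "acyclic (R \<inter> {(u, w). \<phi> u = \<phi> w})"
  shows "acyclic R"
proof -
  let ?Q = "R \<inter> {(u, w). \<phi> u = \<phi> w}"
  have "\<phi> x < \<phi> y \<or> (\<phi> x = \<phi> y \<and> (x, y) \<in> ?Q\<^sup>+)" if "(x, y) \<in> R\<^sup>+" for x y
    using that
  proof (induction rule: trancl_induct)
    case (base y)
    then show ?case using mono[OF base] by (cases "\<phi> x = \<phi> y") auto
  next
    case (step y z)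
    then show ?case
      using mono[OF step(2)] by (cases "\<phi> y = \<phi> z") (auto intro: trancl_into_trancl)
  qed
  then show ?thesis using level unfolding acyclic_def by blast
qed

lemma acyclic_by_fibres:
  assumes const: "\<And>u w. (u, w) \<in> R \<Longrightarrow> g u = g w"
    and fibre: "\<And>x. acyclic (R \<inter> {z. g z = g x} \<times> {z. g z = g x})"
  shows "acyclic R"
proof -
  have "g y = g x \<and> (x, y) \<in> (R \<inter> {z. g z = g x} \<times> {z. g z = g x})\<^sup>+"
    if "(x, y) \<in> R\<^sup>+" for x y
    using that
  proof (induction rule: trancl_induct)
    case (base y)
    then show ?case using const[OF base] by auto
  next
    case (step y z)
    then show ?case using const[OF step(2)] by (auto intro: trancl_into_trancl)
  qed
  then show ?thesis using fibre unfolding acyclic_def by blast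
qed

lemma acyclic_by_strong_components:
  assumes "R \<subseteq> A" and "acyclic (R \<inter> {(u, w). (w, u) \<in> A\<^sup>*})"
  shows "acyclic R"
proof -
  let ?Q = "R \<inter> {(u, w). (w, u) \<in> A\<^sup>*}"
  have "(x, y) \<in> ?Q\<^sup>+" if "(x, y) \<in> R\<^sup>+" "(y, x) \<in> A\<^sup>*" for x y
    using that
  proof (induction rule: trancl_induct)
    case (base y)
    then show ?case by auto
  next
    case (step y z)
    have "(x, y) \<in> A\<^sup>*" using trancl_mono[OF step(1) assms(1)] by (rule trancl_into_rtrancl)
    with step(4) have "(z, y) \<in> A\<^sup>*" by (rule rtrancl_trans)
    moreover have "(y, x) \<in> A\<^sup>*" using step(2,4) assms(1) by (blast intro: converse_rtrancl_into_rtrancl)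
    ultimately show ?case using step by (blast intro: trancl_into_trancl)
  qed
  then show ?thesis using assms(2) unfolding acyclic_def by blast
qed

definition arc_distance :: "('a \<times> 'a) set \<Rightarrow> 'a \<Rightarrow> 'a \<Rightarrow> nat" where
  "arc_distance A u v = (LEAST n. (u, v) \<in> A ^^ n)"

lemma relpow_arc_distance: "(u, v) \<in> A\<^sup>* \<Longrightarrow> (u, v) \<in> A ^^ arc_distance A u v"
  unfolding arc_distance_def by (rule LeastI_ex) (use rtrancl_power in blast)

lemma arc_distance_le: "(u, v) \<in> A ^^ n \<Longrightarrow> arc_distance A u v \<le> n"
  unfolding arc_distance_def by (rule Least_le)

lemma relpow_imp_rtrancl_closer_to_target:
  "(u, r) \<in> A ^^ n \<Longrightarrow> (u, r) \<in> (A \<inter> UNIV \<times> {z. arc_distance A z r < n})\<^sup>*"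
proof (induction n arbitrary: u)
  case 0
  then show ?case by simp
next
  case (Suc n)
  then obtain w where uw: "(u, w) \<in> A" and wr: "(w, r) \<in> A ^^ n"
    by (blast dest: relpow_Suc_D2)
  have "(w, r) \<in> (A \<inter> UNIV \<times> {z. arc_distance A z r < Suc n})\<^sup>*"
    using Suc.IH[OF wr] by (rule rtrancl_mono[THEN subsetD, rotated]) auto
  moreover have "(u, w) \<in> A \<inter> UNIV \<times> {z. arc_distance A z r < Suc n}"
    using uw arc_distance_le[OF wr] by auto
  ultimately show ?case by (rule converse_rtrancl_into_rtrancl[rotated])
qed

lemma relpow_imp_rtrancl_closer_to_source:
  "(r, v) \<in> A ^^ n \<Longrightarrow> (r, v) \<in> (A \<inter> UNIV \<times> ({z. arc_distance A r z < n} \<union> {v}))\<^sup>*"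
proof (induction n arbitrary: v)
  case 0
  then show ?case by simp
next
  case (Suc n)
  then obtain w where rw: "(r, w) \<in> A ^^ n" and wv: "(w, v) \<in> A" by auto
  have "(r, w) \<in> (A \<inter> UNIV \<times> ({z. arc_distance A r z < Suc n} \<union> {v}))\<^sup>*"
    by (rule rtrancl_mono[THEN subsetD, OF _ Suc.IH[OF rw]]) (use arc_distance_le[OF rw] in auto)
  moreover have "(w, v) \<in> A \<inter> UNIV \<times> ({z. arc_distance A r z < Suc n} \<union> {v})"
    using wv by simp
  ultimately show ?case by (rule rtrancl_into_rtrancl)
qed

lemma set_subset_ends_interior: "p \<noteq> [] \<Longrightarrow> set p \<subseteq> {hd p, last p} \<union> interior p"
  unfolding interior_def by (cases p; cases "tl p" rule: rev_cases) auto

lemma interior_subset_set: "interior p \<subseteq> set p"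
  unfolding interior_def by (cases p) (auto dest: in_set_butlastD)

lemma dipath_mono:
  "dipath S (A \<inter> S \<times> S) p \<Longrightarrow> S \<subseteq> V \<Longrightarrow> dipath V A p \<and> set p \<subseteq> S"
  by (auto simp: dipath_def)

lemma dipath_avoiding_if_rtrancl:
  assumes AV: "A \<subseteq> V \<times> V" and u: "u \<in> V"
    and reach: "(u, w) \<in> (A \<inter> UNIV \<times> (- S \<union> {w}))\<^sup>*"
  shows "\<exists>p. dipath V A p \<and> hd p = u \<and> last p = w \<and> interior p \<inter> S = {}"
proof -
  let ?E = "A \<inter> UNIV \<times> (- S \<union> {w})"
  have "(\<lambda>a b. (a, b) \<in> ?E)\<^sup>*\<^sup>* u w"
    using reach by (simp only: rtranclp_rtrancl_eq split_def prod.collapse Collect_mem_eq)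
  then obtain ys where "rtrancl_path (\<lambda>a b. (a, b) \<in> ?E) u ys w"
    unfolding rtranclp_eq_rtrancl_path by blast
  then obtain xs where xs: "rtrancl_path (\<lambda>a b. (a, b) \<in> ?E) u xs w" and dist: "distinct (u # xs)"
    by (rule rtrancl_path_distinct)
  have heads: "z \<in> V \<and> z \<in> - S \<union> {w}" if "z \<in> set xs" for z
    using rtrancl_path_Range[OF xs that] AV by auto
  have last: "last (u # xs) = w"
  proof (cases "xs = []")
    case True
    with xs show ?thesis by (cases rule: rtrancl_path.cases) auto
  qed (simp add: rtrancl_path_last[OF xs])
  have "interior (u # xs) \<inter> S = {}"
  proof (cases xs rule: rev_cases)
    case (snoc ys z)
    then have "z = w" using last by simp
    then show ?thesis using snoc heads dist by (auto simp: interior_def)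
  qed (simp add: interior_def)
  moreover have "((u # xs) ! i, (u # xs) ! Suc i) \<in> A" if "Suc i < length (u # xs)" for i
    using rtrancl_path_nth[OF xs, of i] that by simp
  then have "dipath V A (u # xs)"
    unfolding dipath_def using dist heads u by auto
  ultimately show ?thesis using last by fastforce
qed

definition linked :: "'a set \<Rightarrow> ('a \<times> 'a) set \<Rightarrow> 'a set \<Rightarrow> bool" where
  "linked V A S \<longleftrightarrow> (\<forall>u\<in>S. \<forall>w\<in>S. u \<noteq> w \<longrightarrow>
     (\<exists>p. dipath V A p \<and> hd p = u \<and> last p = w \<and> interior p \<inter> S = {}))"

definition component_root :: "('a \<times> 'a) set \<Rightarrow> 'a \<Rightarrow> 'a" where
  "component_root A v = (SOME r. (v, r) \<in> A\<^sup>* \<and> (r, v) \<in> A\<^sup>*)"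

lemma component_root: "(v, component_root A v) \<in> A\<^sup>* \<and> (component_root A v, v) \<in> A\<^sup>*"
  unfolding component_root_def by (rule someI[of _ v]) simp

lemma component_root_eq:
  assumes "(u, w) \<in> A\<^sup>*" and "(w, u) \<in> A\<^sup>*"
  shows "component_root A u = component_root A w"
proof -
  have "(\<lambda>r. (u, r) \<in> A\<^sup>* \<and> (r, u) \<in> A\<^sup>*) = (\<lambda>r. (w, r) \<in> A\<^sup>* \<and> (r, w) \<in> A\<^sup>*)"
    using assms by (blast intro: rtrancl_trans)
  then show ?thesis unfolding component_root_def by simp
qed

definition dist_from_root :: "('a \<times> 'a) set \<Rightarrow> 'a \<Rightarrow> nat" where
  "dist_from_root A v = arc_distance A (component_root A v) v"

definition dist_to_root :: "('a \<times> 'a) set \<Rightarrow> 'a \<Rightarrow> nat" where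
  "dist_to_root A v = arc_distance A v (component_root A v)"

lemma arc_within_component:
  assumes uw: "(u, w) \<in> A" and wu: "(w, u) \<in> A\<^sup>*"
  shows "component_root A u = component_root A w
    \<and> dist_from_root A w \<le> Suc (dist_from_root A u) \<and> dist_to_root A u \<le> Suc (dist_to_root A w)"
proof -
  have root: "component_root A u = component_root A w"
    using uw wu by (blast intro: component_root_eq)
  have "(component_root A w, w) \<in> A ^^ Suc (dist_from_root A u)"
    using relpow_Suc_I[OF relpow_arc_distance[OF component_root[THEN conjunct2]] uw] root
    unfolding dist_from_root_def by simp
  moreover have "(u, component_root A u) \<in> A ^^ Suc (dist_to_root A w)"
    using relpow_Suc_I2[OF uw relpow_arc_distance[OF component_root[THEN conjunct1]]] root
    unfolding dist_to_root_def by simp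
  ultimately show ?thesis
    using root arc_distance_le unfolding dist_from_root_def dist_to_root_def by metis
qed

definition distance_profile :: "('a \<times> 'a) set \<Rightarrow> 'a \<Rightarrow> 'a \<times> nat \<times> nat" where
  "distance_profile A v = (component_root A v, dist_from_root A v, dist_to_root A v)"

definition distance_class :: "'a set \<Rightarrow> ('a \<times> 'a) set \<Rightarrow> 'a \<Rightarrow> 'a set" where
  "distance_class V A v = {w\<in>V. distance_profile A w = distance_profile A v}"

lemma distance_class_eq: "w \<in> distance_class V A v \<Longrightarrow> distance_class V A w = distance_class V A v"
  unfolding distance_class_def by auto

text \<open>A shortest path from u to the root and a shortest path from the root to w pass only
  through vertices strictly closer to the root than the class, so they avoid it.\<close>
lemma linked_distance_class:
  assumes AV: "A \<subseteq> V \<times> V"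
  shows "linked V A (distance_class V A v)"
  unfolding linked_def
proof (intro ballI impI)
  fix u w assume u: "u \<in> distance_class V A v" and w: "w \<in> distance_class V A v"
  let ?C = "distance_class V A v" and ?r = "component_root A v"
  have closer: "z \<notin> ?C"
    if "arc_distance A z ?r < dist_to_root A v \<or> arc_distance A ?r z < dist_from_root A v" for z
    using that unfolding distance_class_def distance_profile_def dist_from_root_def dist_to_root_def by auto
  have "(u, ?r) \<in> A ^^ dist_to_root A v"
    using u relpow_arc_distance[OF component_root[of u A, THEN conjunct1]]
    unfolding distance_class_def distance_profile_def dist_to_root_def by auto
  then have "(u, ?r) \<in> (A \<inter> UNIV \<times> (- ?C \<union> {w}))\<^sup>*"
    by (rule relpow_imp_rtrancl_closer_to_target[THEN rtrancl_mono[THEN subsetD, rotated]])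
      (use closer in auto)
  moreover have "(?r, w) \<in> A ^^ dist_from_root A v"
    using w relpow_arc_distance[OF component_root[of w A, THEN conjunct2]]
    unfolding distance_class_def distance_profile_def dist_from_root_def by auto
  then have "(?r, w) \<in> (A \<inter> UNIV \<times> (- ?C \<union> {w}))\<^sup>*"
    by (rule relpow_imp_rtrancl_closer_to_source[THEN rtrancl_mono[THEN subsetD, rotated]])
      (use closer in auto)
  ultimately have "(u, w) \<in> (A \<inter> UNIV \<times> (- ?C \<union> {w}))\<^sup>*" by (rule rtrancl_trans)
  moreover have "u \<in> V" using u unfolding distance_class_def by simp
  ultimately show "\<exists>p. dipath V A p \<and> hd p = u \<and> last p = w \<and> interior p \<inter> ?C = {}"
    using dipath_avoiding_if_rtrancl[OF AV] by blast
qed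

text \<open>Inside a strong component an arc changes each root distance by at most one in the
  "wrong" direction; equal parities exclude this, so along the arc the distance from the root
  does not increase and the distance to the root does not decrease.\<close>
lemma acyclic_if_parities_agree:
  assumes RA: "R \<subseteq> A" and RV: "R \<subseteq> V \<times> V"
    and parity: "\<And>u w. (u, w) \<in> R \<Longrightarrow> dist_from_root A u mod 2 = dist_from_root A w mod 2
                              \<and> dist_to_root A u mod 2 = dist_to_root A w mod 2"
    and in_classes: "\<And>v. acyclic (R \<inter> distance_class V A v \<times> distance_class V A v)"
  shows "acyclic R"
proof (rule acyclic_by_strong_components[OF RA])
  let ?Q = "R \<inter> {(u, w). (w, u) \<in> A\<^sup>*}"
  have monotone: "component_root A u = component_root A w \<and> dist_from_root A w \<le> dist_from_root A u
      \<and> dist_to_root A u \<le> dist_to_root A w" if "(u, w) \<in> ?Q" for u w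
  proof -
    have same_parity_le: "x \<le> y" if "x \<le> Suc y" "x mod 2 = y mod 2" for x y :: nat
      using that by (cases "x = Suc y") (auto simp: mod_Suc split: if_splits)
    have "(u, w) \<in> A" "(w, u) \<in> A\<^sup>*" using that RA by auto
    then have "component_root A u = component_root A w" and
      "dist_from_root A w \<le> Suc (dist_from_root A u)" "dist_to_root A u \<le> Suc (dist_to_root A w)"
      by (blast dest: arc_within_component)+
    moreover have "dist_from_root A w mod 2 = dist_from_root A u mod 2"
      "dist_to_root A u mod 2 = dist_to_root A w mod 2"
      using parity[of u w] that by auto
    ultimately show ?thesis using same_parity_le by blast
  qed
  define \<phi> where "\<phi> v = int (dist_to_root A v) - int (dist_from_root A v)" for v
  show "acyclic ?Q"
  proof (rule acyclic_by_potential[of _ \<phi>])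
    show "\<phi> u \<le> \<phi> w" if "(u, w) \<in> ?Q" for u w
      using monotone[OF that] unfolding \<phi>_def by simp
    show "acyclic (?Q \<inter> {(u, w). \<phi> u = \<phi> w})"
    proof (rule acyclic_by_fibres[of _ "distance_profile A"])
      show "distance_profile A u = distance_profile A w" if "(u, w) \<in> ?Q \<inter> {(u, w). \<phi> u = \<phi> w}" for u w
        using that monotone[of u w] unfolding \<phi>_def distance_profile_def by auto
      show "acyclic (?Q \<inter> {(u, w). \<phi> u = \<phi> w} \<inter> {z. distance_profile A z = distance_profile A x}
                                \<times> {z. distance_profile A z = distance_profile A x})" for x
        using in_classes[of x] by (rule acyclic_subset) (use RV in \<open>auto simp: distance_class_def\<close>)
    qed
  qed
qed

lemma dicolouring_choice:
  assumes "\<And>x. dicolourable (C x) A k"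
  obtains \<kappa> where "\<And>x w. w \<in> C x \<Longrightarrow> \<kappa> (C x) w < k"
    and "\<And>x i. i < k \<Longrightarrow> acyclic_set A {w\<in>C x. \<kappa> (C x) w = i}"
proof -
  have "\<forall>S. \<exists>c. dicolourable S A k \<longrightarrow>
      (\<forall>w\<in>S. c w < k) \<and> (\<forall>i<k. acyclic_set A {w\<in>S. c w = i})"
    unfolding dicolourable_def by blast
  then obtain \<kappa> where \<kappa>: "\<forall>S. dicolourable S A k \<longrightarrow>
      (\<forall>w\<in>S. \<kappa> S w < k) \<and> (\<forall>i<k. acyclic_set A {w\<in>S. \<kappa> S w = i})"
    by (rule choice[THEN exE])
  show ?thesis
  proof (rule that)
    show "\<kappa> (C x) w < k" if "w \<in> C x" for x w
      using \<kappa> assms[of x] that by blast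
    show "acyclic_set A {w\<in>C x. \<kappa> (C x) w = i}" if "i < k" for x i
      using \<kappa> assms[of x] that by blast
  qed
qed

lemma dicolourable_if_linked_sets_dicolourable:
  assumes AV: "A \<subseteq> V \<times> V"
    and linked_dicolourable: "\<And>S. S \<subseteq> V \<Longrightarrow> linked V A S \<Longrightarrow> dicolourable S A k"
  shows "dicolourable V A (4 * k)"
proof -
  let ?C = "distance_class V A"
  have "dicolourable (?C v) A k" for v
  proof (rule linked_dicolourable)
    show "?C v \<subseteq> V" unfolding distance_class_def by blast
  qed (rule linked_distance_class[OF AV])
  then obtain \<kappa> where \<kappa>: "\<And>v w. w \<in> ?C v \<Longrightarrow> \<kappa> (?C v) w < k"
    "\<And>v i. i < k \<Longrightarrow> acyclic_set A {w\<in>?C v. \<kappa> (?C v) w = i}"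
    by (rule dicolouring_choice[of "distance_class V A"]) blast
  have in_class: "v \<in> ?C v" if "v \<in> V" for v using that unfolding distance_class_def by simp
  define par where "par v = 2 * (dist_from_root A v mod 2) + dist_to_root A v mod 2" for v
  define col where "col v = 4 * \<kappa> (?C v) v + par v" for v
  have par_less: "par v < 4" for v unfolding par_def by simp
  then have col_div: "col v div 4 = \<kappa> (?C v) v" and col_mod: "col v mod 4 = par v" for v
    unfolding col_def by simp_all
  have col_eq: "\<kappa> (?C u) u = \<kappa> (?C w) w \<and> dist_from_root A u mod 2 = dist_from_root A w mod 2
      \<and> dist_to_root A u mod 2 = dist_to_root A w mod 2" if "col u = col w" for u w
  proof -
    have "par u = par w" using col_mod[of u] col_mod[of w] that by simp
    moreover have "par v div 2 = dist_from_root A v mod 2" "par v mod 2 = dist_to_root A v mod 2" for v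
      unfolding par_def by simp_all
    ultimately show ?thesis using col_div[of u] col_div[of w] that by metis
  qed
  show ?thesis
    unfolding dicolourable_def
  proof (intro exI[of _ col] conjI ballI allI impI)
    show "col v < 4 * k" if "v \<in> V" for v
      using \<kappa>(1)[OF in_class[OF that]] par_less[of v] unfolding col_def by simp
    fix t assume "t < 4 * k"
    let ?T = "{v\<in>V. col v = t}"
    show "acyclic_set A ?T"
      unfolding acyclic_set_def
    proof (rule acyclic_if_parities_agree)
      show "dist_from_root A u mod 2 = dist_from_root A w mod 2 \<and> dist_to_root A u mod 2 = dist_to_root A w mod 2"
        if "(u, w) \<in> A \<inter> ?T \<times> ?T" for u w
        using that col_eq by auto
      fix v
      let ?K = "{w\<in>?C v. \<kappa> (?C v) w = t div 4}"
      have "A \<inter> ?T \<times> ?T \<inter> ?C v \<times> ?C v \<subseteq> A \<inter> ?K \<times> ?K"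
      proof (rule subrelI)
        fix u w assume "(u, w) \<in> A \<inter> ?T \<times> ?T \<inter> ?C v \<times> ?C v"
        then have "(u, w) \<in> A" "u \<in> ?C v" "w \<in> ?C v" "col u = t" "col w = t" by auto
        then show "(u, w) \<in> A \<inter> ?K \<times> ?K"
          using col_div[of u] col_div[of w] distance_class_eq[of u V A v] distance_class_eq[of w V A v]
          by simp
      qed
      moreover have "acyclic (A \<inter> ?K \<times> ?K)"
        using \<kappa>(2)[of "t div 4" v] \<open>t < 4 * k\<close> unfolding acyclic_set_def by simp
      ultimately show "acyclic (A \<inter> ?T \<times> ?T \<inter> ?C v \<times> ?C v)"
        by (rule acyclic_subset[rotated])
    qed (use AV in auto)
  qed
qed

lemma dicolourable_restrict: "dicolourable S (A \<inter> S \<times> S) k \<longleftrightarrow> dicolourable S A k"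
proof -
  have "(A \<inter> S \<times> S) \<inter> {v\<in>S. P v} \<times> {v\<in>S. P v} = A \<inter> {v\<in>S. P v} \<times> {v\<in>S. P v}" for P
    by auto
  then show ?thesis unfolding dicolourable_def acyclic_set_def by simp
qed

lemma dicolourable_mono:
  assumes "dicolourable V A k" and "k \<le> l"
  shows "dicolourable V A l"
proof -
  obtain c where c: "\<forall>v\<in>V. c v < k" "\<forall>i<k. acyclic_set A {v\<in>V. c v = i}"
    using assms(1) unfolding dicolourable_def by blast
  have "acyclic_set A {v\<in>V. c v = i}" for i
  proof (cases "i < k")
    case False
    then have empty: "{v\<in>V. c v = i} = {}" using c(1) by auto
    show ?thesis unfolding acyclic_set_def empty by (simp add: acyclic_def)
  qed (use c(2) in blast)
  then show ?thesis
    unfolding dicolourable_def using c(1) assms(2) by (intro exI[of _ c]) auto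
qed

lemma dicolourable_card:
  assumes "digraph V A"
  shows "dicolourable V A (card V)"
proof -
  obtain h where h: "bij_betw h V {0..<card V}"
    using assms ex_bij_betw_finite_nat unfolding digraph_def by blast
  have "A \<inter> {v\<in>V. h v = i} \<times> {v\<in>V. h v = i} = {}" for i
    using assms h unfolding digraph_def bij_betw_def inj_on_def by auto
  then show ?thesis
    unfolding dicolourable_def acyclic_set_def
    using h by (intro exI[of _ h]) (auto simp: bij_betw_def acyclic_def)
qed

lemma not_dicolourable_below_dichromatic_number:
  "k < dichromatic_number V A \<Longrightarrow> \<not> dicolourable V A k"
  unfolding dichromatic_number_def by (rule not_less_Least)

lemma contains_subdivision_no_arcs:
  assumes "finite V" and "finite VF" and "card VF \<le> card V"
  shows "contains_subdivision V A VF {}"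
  using card_le_inj[OF assms(2,1,3)] unfolding contains_subdivision_def by blast

lemma contains_subdivision_insert_arc:
  assumes S: "S \<subseteq> V" "linked V A S"
    and sub: "contains_subdivision S (A \<inter> S \<times> S) VF AF"
    and xy: "x \<in> VF" "y \<in> VF" "x \<noteq> y"
  shows "contains_subdivision V A VF (insert (x, y) AF)"
proof -
  obtain phi P where inj: "inj_on phi VF" and phi: "phi ` VF \<subseteq> S"
    and paths: "\<forall>e\<in>AF. dipath S (A \<inter> S \<times> S) (P e) \<and> hd (P e) = phi (fst e)
      \<and> last (P e) = phi (snd e) \<and> interior (P e) \<inter> phi ` VF = {}"
    and disjoint: "\<forall>e\<in>AF. \<forall>e'\<in>AF. e \<noteq> e' \<longrightarrow> interior (P e) \<inter> set (P e') = {}"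
    using sub unfolding contains_subdivision_def by (elim exE conjE)
  have in_S: "dipath V A (P e) \<and> set (P e) \<subseteq> S" if "e \<in> AF" for e
    using paths that dipath_mono S(1) by blast
  have "phi x \<noteq> phi y" "phi x \<in> S" "phi y \<in> S"
    using inj phi xy unfolding inj_on_def by auto
  then obtain Q where Q: "dipath V A Q" "hd Q = phi x" "last Q = phi y" "interior Q \<inter> S = {}"
    using S(2) unfolding linked_def by blast
  have Q_meets_S: "set Q \<inter> S \<subseteq> phi ` VF"
    using set_subset_ends_interior[of Q] Q xy unfolding dipath_def by auto
  let ?P = "P((x, y) := Q)"
  show ?thesis
    unfolding contains_subdivision_def
  proof (intro exI[of _ phi] exI[of _ ?P] conjI)
    show "inj_on phi VF" "phi ` VF \<subseteq> V" using inj phi S(1) by auto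
  next
    show "\<forall>e\<in>insert (x, y) AF. dipath V A (?P e) \<and> hd (?P e) = phi (fst e)
        \<and> last (?P e) = phi (snd e) \<and> interior (?P e) \<inter> phi ` VF = {}"
    proof
      fix e assume e: "e \<in> insert (x, y) AF"
      show "dipath V A (?P e) \<and> hd (?P e) = phi (fst e) \<and> last (?P e) = phi (snd e)
        \<and> interior (?P e) \<inter> phi ` VF = {}"
    proof (cases "e = (x, y)")
      case True
      then show ?thesis using Q phi by auto
    next
      case False
      then show ?thesis using e paths in_S[of e] by auto
    qed
    qed
  next
    show "\<forall>e\<in>insert (x, y) AF. \<forall>e'\<in>insert (x, y) AF.
        e \<noteq> e' \<longrightarrow> interior (?P e) \<inter> set (?P e') = {}"
    proof (intro ballI impI)
    fix e e' assume e: "e \<in> insert (x, y) AF" and e': "e' \<in> insert (x, y) AF" and "e \<noteq> e'"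
    then consider "e = (x, y)" "e' \<in> AF" | "e' = (x, y)" "e \<in> AF" | "e \<noteq> (x, y)" "e' \<noteq> (x, y)"
      by blast
    then show "interior (?P e) \<inter> set (?P e') = {}"
    proof cases
      case 1
      then show ?thesis using Q(4) in_S[of e'] \<open>e \<noteq> e'\<close> by auto
    next
      case 2
      have "interior (P e) \<subseteq> set (P e)" "set (P e) \<subseteq> S"
        using in_S[of e] 2 interior_subset_set[of "P e"] by auto
      then have "interior (P e) \<inter> set Q \<subseteq> interior (P e) \<inter> phi ` VF"
        using Q_meets_S by blast
      moreover have "interior (P e) \<inter> phi ` VF = {}" using paths 2 by blast
      ultimately show ?thesis using 2 \<open>e \<noteq> e'\<close> by auto
    next
      case 3
      then show ?thesis using e e' disjoint \<open>e \<noteq> e'\<close> by simp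
    qed
    qed
  qed
qed

theorem contains_subdivision_if_not_dicolourable:
  assumes "digraph VF AF" and "digraph V A"
    and "\<not> dicolourable V A (4 ^ card AF * (card VF - 1))"
  shows "contains_subdivision V A VF AF"
proof -
  have "finite AF"
    using assms(1) finite_subset[of AF "VF \<times> VF"] unfolding digraph_def by blast
  then show ?thesis using assms
  proof (induction AF arbitrary: V A rule: finite_induct)
    case empty
    have "card VF \<le> card V"
    proof (rule ccontr)
      assume "\<not> card VF \<le> card V"
      then have "dicolourable V A (card VF - 1)"
        using dicolourable_mono[OF dicolourable_card[OF empty.prems(2)]] by simp
      then show False using empty.prems(3) by simp
    qed
    then show ?case
      using empty.prems(1,2) contains_subdivision_no_arcs unfolding digraph_def by blast
  next
    case (insert e AF)
    obtain x y where e: "e = (x, y)" by fastforce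
    have xy: "x \<in> VF" "y \<in> VF" "x \<noteq> y" and F: "digraph VF AF"
      using insert.prems(1) unfolding e digraph_def by auto
    have AV: "A \<subseteq> V \<times> V" using insert.prems(2) unfolding digraph_def by blast
    define k where "k = 4 ^ card AF * (card VF - 1)"
    have "\<not> dicolourable V A (4 * k)"
      using insert.prems(3) insert.hyps unfolding k_def by (simp add: mult.assoc)
    then obtain S where S: "S \<subseteq> V" "linked V A S" and not_col: "\<not> dicolourable S A k"
      using dicolourable_if_linked_sets_dicolourable[OF AV] by metis
    have "digraph S (A \<inter> S \<times> S)"
      using insert.prems(2) S(1) finite_subset unfolding digraph_def by auto
    moreover have "\<not> dicolourable S (A \<inter> S \<times> S) (4 ^ card AF * (card VF - 1))"
      using not_col unfolding k_def dicolourable_restrict .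
    ultimately have "contains_subdivision S (A \<inter> S \<times> S) VF AF"
      by (rule insert.IH[OF F])
    from contains_subdivision_insert_arc[OF S this xy] show ?case unfolding e .
  qed
qed

theorem theorem32:
  fixes VF :: "'b set" and AF :: "('b \<times> 'b) set"
    and V :: "'a set" and A :: "('a \<times> 'a) set"
  assumes "digraph VF AF"
    and "digraph V A"
    and "dichromatic_number V A \<ge> 4 ^ card AF * (card VF - 1) + 1"
  shows "contains_subdivision V A VF AF"
proof (rule contains_subdivision_if_not_dicolourable[OF assms(1,2)])
  show "\<not> dicolourable V A (4 ^ card AF * (card VF - 1))"
    using assms(3) by (intro not_dicolourable_below_dichromatic_number) simp
qed

end
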